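(* Let $M,N$ be complete pointed metric spaces and $f\colon M\to N$ a Lipschitz map with $f(0_M)=0_N$. Suppose: $(P_1)$ for every bounded $S\subset M$, $f(S)$ is totally bounded in $N$; $(P_2)$ $\displaystyle\lim_{d(x,y)\to0}\frac{d(f(x),f(y))}{d(x,y)}=0$ (uniform local flatness); $(P_4)$ $f$ is flat at infinity: $\displaystyle\lim_{d(x,0_M)\to\infty,\ d(y,0_M)\to\infty}\frac{d(f(x),f(y))}{d(x,y)}=0$ (limit over pairs $x\neq y$), i.e. for every $\varepsilon>0$ there is $R>0$ such that $d(f(x),f(y))\le\varepsilon d(x,y)$ whenever $x\neq y$ and $d(x,0_M),d(y,0_M)\ge R$. Then $\widehat f\colon\mathcal F(M)\to\mathcal F(N)$ is compact.
   Context: Scalars are $\mathbb K=\mathbb R$ or $\mathbb C$. For a pointed metric space $(M,d,0_M)$, $\mathrm{Lip}_0(M)$ denotes the Banach space of Lipschitz functions $g\colon M\to\mathbb K$ with $g(0_M)=0$ normed by the best Lipschitz constant; $\delta(x)\in\mathrm{Lip}_0(M)^*$ is evaluation at $x$; the Lipschitz-free space $\mathcal F(M)$ is the norm-closed linear span of $\{\delta(x):x\in M\}$ in $\mathrm{Lip}_0(M)^*$. For a Lipschitz map $f\colon M\to N$ with $f(0_M)=0_N$, $\widehat f\colon\mathcal F(M)\to\mathcal F(N)$ is the unique bounded linear operator with $\widehat f(\delta(x))=\delta(f(x))$ for all $x\in M$. *)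

theory Defs
  imports "HOL-Analysis.Analysis"
begin

text \<open>Scalars: a type 'k of class real_normed_field and banach (complete normed fields
  over the reals, i.e. R or C up to isomorphism). A pointed metric space is a type of
  class metric_space together with a base point p.\<close>

definition Lip0 :: "'a::metric_space \<Rightarrow> ('a \<Rightarrow> 'k::real_normed_field) set" where
  "Lip0 p = {g. (\<exists>L. L-lipschitz_on UNIV g) \<and> g p = 0}"

definition Lip0_ball :: "'a::metric_space \<Rightarrow> ('a \<Rightarrow> 'k::real_normed_field) set" where
  "Lip0_ball p = {g. 1-lipschitz_on UNIV g \<and> g p = 0}"

definition Lip0_dual :: "'a::metric_space \<Rightarrow> (('a \<Rightarrow> 'k::real_normed_field) \<Rightarrow> 'k) set" where
  "Lip0_dual p = {\<phi>.
     (\<forall>c g h. g \<in> Lip0 p \<longrightarrow> h \<in> Lip0 p \<longrightarrow> \<phi> (\<lambda>x. c * g x + h x) = c * \<phi> g + \<phi> h) \<and>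
     (\<exists>C. \<forall>g\<in>Lip0_ball p. norm (\<phi> g) \<le> C)}"

definition dual_norm :: "'a::metric_space \<Rightarrow> (('a \<Rightarrow> 'k::real_normed_field) \<Rightarrow> 'k) \<Rightarrow> real" where
  "dual_norm p \<phi> = (SUP g\<in>Lip0_ball p. norm (\<phi> g))"

definition delta :: "'a \<Rightarrow> (('a \<Rightarrow> 'k) \<Rightarrow> 'k)" where
  "delta x = (\<lambda>g. g x)"

definition delta_span :: "(('a \<Rightarrow> 'k::real_normed_field) \<Rightarrow> 'k) set" where
  "delta_span = {\<phi>. \<exists>(n::nat) c xs. \<phi> = (\<lambda>g. \<Sum>i<n. c i * delta (xs i) g)}"

text \<open>Lipschitz-free space F(M): norm closure of the span of the deltas in Lip_0(M)^*.\<close>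
definition FreeSp :: "'a::metric_space \<Rightarrow> (('a \<Rightarrow> 'k::real_normed_field) \<Rightarrow> 'k) set" where
  "FreeSp p = {\<phi> \<in> Lip0_dual p. \<forall>e>0. \<exists>\<psi>\<in>delta_span. dual_norm p (\<phi> - \<psi>) < e}"

text \<open>The linearization f-hat: the bounded linear operator with f-hat(delta x) = delta (f x),
  given explicitly by f-hat(mu)(g) = mu(g o f).\<close>
definition lift :: "('a \<Rightarrow> 'b) \<Rightarrow> (('a \<Rightarrow> 'k) \<Rightarrow> 'k) \<Rightarrow> (('b \<Rightarrow> 'k) \<Rightarrow> 'k)" where
  "lift f \<mu> = (\<lambda>g. \<mu> (g \<circ> f))"

definition compact_free_op ::
  "'a::metric_space \<Rightarrow> 'b::metric_space \<Rightarrow>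
   ((('a \<Rightarrow> 'k::real_normed_field) \<Rightarrow> 'k) \<Rightarrow> (('b \<Rightarrow> 'k) \<Rightarrow> 'k)) \<Rightarrow> bool" where
  "compact_free_op p q T \<longleftrightarrow>
     T ` FreeSp p \<subseteq> FreeSp q \<and>
     (\<forall>\<mu>::nat \<Rightarrow> _. (\<forall>n. \<mu> n \<in> FreeSp p \<and> dual_norm p (\<mu> n) \<le> 1) \<longrightarrow>
        (\<exists>(r::nat \<Rightarrow> nat) \<nu>. strict_mono r \<and> \<nu> \<in> FreeSp q \<and>
           (\<lambda>n. dual_norm q (T (\<mu> (r n)) - \<nu>)) \<longlonglongrightarrow> 0))"

end

(*
  A real normed field is R or C: every element is a root of a real quadratic, by a
  Gelfand-Mazur type minimisation argument, so closed balls of scalars are compact.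

  The operator lift f is compact as soon as {g o f | g in the unit ball of Lip_0(N)} is totally
  bounded in the Lipschitz seminorm; then a diagonal argument makes every bounded sequence in F(M)
  uniformly Cauchy on this set, i.e. its image is Cauchy in F(N), which is complete.
  Total boundedness comes from the three hypotheses: by (P2) and (P4), for any g, g' in the ball,
  the slopes of g o f - g' o f are small on pairs of points that are close together or not both near
  the base point; the remaining pairs lie in a bounded region, where f takes values in a totally
  bounded set by (P1), on which the unit ball of Lip_0(N) has finite uniform nets.
*)
theory Submission
  imports Defs "HOL-Computational_Algebra.Fundamental_Theorem_Algebra" "HOL-Library.Diagonal_Subsequence"
begin

section \<open>Closed balls in a real normed field are compact\<close>

lemma map_poly_of_real_add:
  "map_poly (of_real :: real \<Rightarrow> 'a::{real_algebra_1,comm_ring_1}) (p + q) = map_poly of_real p + map_poly of_real q"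
  by (intro poly_eqI) (simp add: coeff_map_poly)

lemma map_poly_of_real_mult:
  "map_poly (of_real :: real \<Rightarrow> 'a::{real_algebra_1,comm_ring_1}) (p * q) = map_poly of_real p * map_poly of_real q"
  by (intro poly_eqI) (simp add: coeff_map_poly coeff_mult of_real_sum)

lemma map_poly_of_real_power:
  "map_poly (of_real :: real \<Rightarrow> 'a::{real_algebra_1,comm_ring_1}) (p ^ n) = map_poly of_real p ^ n"
  by (induction n) (simp_all add: map_poly_of_real_mult)

lemma map_poly_of_real_prod_mset:
  "map_poly (of_real :: real \<Rightarrow> 'a::{real_algebra_1,comm_ring_1}) (\<Prod>x\<in>#A. h x) = (\<Prod>x\<in>#A. map_poly of_real (h x))"
  by (induction A) (simp_all add: map_poly_of_real_mult)

lemma map_poly_of_real_const: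
  "map_poly (of_real :: real \<Rightarrow> 'a::{real_algebra_1,comm_ring_1}) [:c:] = [:of_real c:]"
  by (simp add: map_poly_pCons)

lemma map_poly_of_real_inject:
  "map_poly (of_real :: real \<Rightarrow> 'a::{real_algebra_1,comm_ring_1}) p = map_poly of_real q \<Longrightarrow> p = q"
  by (metis coeff_map_poly of_real_0 of_real_eq_iff poly_eqI)

lemma map_poly_cnj_mult: "map_poly cnj (p * q) = map_poly cnj p * map_poly cnj q"
  by (intro poly_eqI) (simp add: coeff_map_poly coeff_mult)

lemma map_poly_cnj_prod_mset: "map_poly cnj (\<Prod>x\<in>#A. h x) = (\<Prod>x\<in>#A. map_poly cnj (h x))"
  by (induction A) (simp_all add: map_poly_cnj_mult)

lemma norm_prod_mset: "norm (\<Prod>x\<in>#A. h x) = (\<Prod>x\<in>#A. norm (h x :: 'k::real_normed_field))"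
  by (induction A) (simp_all add: norm_mult)

lemma power_size_le_prod_mset:
  assumes "\<And>x. x \<in># A \<Longrightarrow> (m::real) \<le> h x" "0 \<le> m"
  shows "m ^ size A \<le> (\<Prod>x\<in>#A. h x)"
  using assms
proof (induction A)
  case (add x A)
  then have "m \<le> h x" "m ^ size A \<le> (\<Prod>x\<in>#A. h x)" by auto
  then show ?case using add.prems(2) by (simp add: mult_mono)
qed simp

definition conj_pair_poly :: "complex \<Rightarrow> real poly" where
  "conj_pair_poly z = [:(cmod z)^2, -2 * Re z, 1:]"

lemma map_poly_of_real_conj_pair_poly:
  "map_poly of_real (conj_pair_poly z) = [:-z, 1:] * [:-cnj z, 1:]"
  using cmod_power2[of z]
  by (simp add: conj_pair_poly_def map_poly_pCons complex_eq_iff power2_eq_square)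

lemma poly_conj_pair_poly:
  "poly (map_poly (of_real :: real \<Rightarrow> 'a::{real_algebra_1,comm_ring_1}) (conj_pair_poly z)) x
     = x * x - of_real (2 * Re z) * x + of_real ((cmod z)^2)"
  by (simp add: conj_pair_poly_def map_poly_pCons algebra_simps)

lemma monic_real_poly_square_eq_prod_conj_pair_poly:
  fixes G :: "real poly"
  assumes "lead_coeff G = 1"
  shows "G * G = (\<Prod>x\<in>#proots (map_poly of_real G). conj_pair_poly x)"
proof -
  define Gc where "Gc = (map_poly of_real G :: complex poly)"
  define R where "R = proots Gc"
  have "lead_coeff Gc = 1"
    unfolding Gc_def by (subst degree_map_poly) (simp_all add: coeff_map_poly assms)
  then have dec: "Gc = (\<Prod>x\<in>#R. [:-x, 1:])"
    using complex_poly_decompose_multiset[of Gc] by (simp add: R_def)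
  \<comment> \<open>the roots of a real polynomial come in conjugate pairs\<close>
  have "Gc = map_poly cnj Gc"
    unfolding Gc_def by (intro poly_eqI) (simp add: coeff_map_poly)
  also have "\<dots> = (\<Prod>x\<in>#R. [:-cnj x, 1:])"
    by (subst dec) (simp add: map_poly_cnj_prod_mset map_poly_pCons)
  finally have dec_cnj: "Gc = (\<Prod>x\<in>#R. [:-cnj x, 1:])" .
  have "Gc * Gc = (\<Prod>x\<in>#R. [:-x, 1:] * [:-cnj x, 1:])"
    by (subst dec_cnj, subst (1) dec) (rule prod_mset.distrib[symmetric])
  also have "\<dots> = map_poly of_real (\<Prod>x\<in>#R. conj_pair_poly x)"
    by (simp add: map_poly_of_real_conj_pair_poly map_poly_of_real_prod_mset)
  finally show ?thesis
    by (intro map_poly_of_real_inject[where 'a=complex]) (simp add: map_poly_of_real_mult Gc_def R_def)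
qed

lemma norm_poly_square_eq_prod_conj_pair_poly:
  fixes G :: "real poly" and \<xi> :: "'k::real_normed_field"
  assumes "lead_coeff G = 1"
  shows "(norm (poly (map_poly of_real G) \<xi>))^2
    = (\<Prod>x\<in>#proots (map_poly of_real G). norm (poly (map_poly of_real (conj_pair_poly x)) \<xi>))"
proof -
  have "(norm (poly (map_poly of_real G) \<xi>))^2 = norm (poly (map_poly of_real (G * G)) \<xi>)"
    by (simp add: map_poly_of_real_mult norm_mult power2_eq_square)
  then show ?thesis
    by (simp add: monic_real_poly_square_eq_prod_conj_pair_poly[OF assms] map_poly_of_real_prod_mset
        poly_prod_mset norm_prod_mset)
qed

lemma conj_pair_poly_min_power_bound:
  fixes \<xi> :: "'k::real_normed_field"
  defines "F \<equiv> \<lambda>z. norm (poly (map_poly of_real (conj_pair_poly z)) \<xi>)"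
  assumes n: "n \<ge> 1" and m: "m > 0" and z0: "F z0 = m" and min: "\<And>z. m \<le> F z"
    and eps: "\<epsilon> > 0" and w: "poly (map_poly of_real (conj_pair_poly z0)) w = - complex_of_real \<epsilon>"
  shows "F w * m ^ (2*n - 1) \<le> (m^n + \<epsilon>^n)^2"
proof -
  \<comment> \<open>w is a root of G = q0^n - (-\<epsilon>)^n, and norm (G \<xi>)^2 is a product of 2n values of F,
      one of them F w and the others at least m\<close>
  define q0 where "q0 = conj_pair_poly z0"
  define G where "G = q0 ^ n + [:- ((-\<epsilon>) ^ n):]"
  have "q0 \<noteq> 0" "degree q0 = 2" "lead_coeff q0 = 1"
    by (simp_all add: q0_def conj_pair_poly_def)
  then have deg: "degree (q0 ^ n) = 2*n" and lc_pow: "lead_coeff (q0 ^ n) = 1"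
    by (simp add: degree_power_eq, metis lead_coeff_power power_one)
  then have const_lt: "degree [:- ((-\<epsilon>) ^ n):] < degree (q0 ^ n)" using n by simp
  then have dG: "degree G = 2*n"
    unfolding G_def using deg by (simp add: degree_add_eq_left)
  have lc: "lead_coeff G = 1"
    unfolding G_def using lead_coeff_add_le[OF const_lt] lc_pow by (simp add: add.commute)
  define R where "R = proots (map_poly of_real G :: complex poly)"
  have "poly (map_poly of_real G) w = 0"
    using w by (simp add: G_def q0_def map_poly_of_real_add map_poly_of_real_power map_poly_of_real_const)
  moreover have "map_poly of_real G \<noteq> (0 :: complex poly)"
    using lc by (auto simp: map_poly_eq_0_iff)
  ultimately have "w \<in># R" by (simp add: R_def)
  then obtain R' where R': "R = add_mset w R'" by (metis multi_member_split)
  have "size R = 2*n"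
    unfolding R_def by (simp add: size_proots_complex degree_map_poly dG)
  then have sR': "size R' = 2*n - 1" using R' by simp
  have "(norm (poly (map_poly of_real G) \<xi>))^2 = (\<Prod>x\<in>#R. F x)"
    unfolding F_def R_def by (rule norm_poly_square_eq_prod_conj_pair_poly[OF lc])
  also have "\<dots> = F w * (\<Prod>x\<in>#R'. F x)" by (simp add: R')
  finally have "F w * (\<Prod>x\<in>#R'. F x) = (norm (poly (map_poly of_real G) \<xi>))^2" ..
  moreover have "F w * m ^ (2*n - 1) \<le> F w * (\<Prod>x\<in>#R'. F x)"
    using power_size_le_prod_mset[of R' m F] min m sR'
    by (intro mult_left_mono) (auto simp: F_def)
  moreover have "norm (poly (map_poly of_real G) \<xi>) \<le> m^n + \<epsilon>^n"
  proof -
    have "poly (map_poly of_real G) \<xi> = poly (map_poly of_real q0) \<xi> ^ n + of_real (- ((-\<epsilon>) ^ n))"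
      by (simp add: G_def map_poly_of_real_add map_poly_of_real_power map_poly_of_real_const)
    also have "norm \<dots> \<le> m^n + \<epsilon>^n"
      using norm_triangle_ineq[of "poly (map_poly of_real q0) \<xi> ^ n" "of_real (- ((-\<epsilon>) ^ n)) :: 'k"]
        z0 eps by (simp add: F_def q0_def norm_power power_abs)
    finally show ?thesis .
  qed
  ultimately show ?thesis
    by (smt (verit, best) norm_ge_zero power_mono)
qed

lemma conj_pair_poly_eval_coercive:
  fixes \<xi> :: "'k::real_normed_field"
  defines "F \<equiv> \<lambda>z. norm (poly (map_poly of_real (conj_pair_poly z)) \<xi>)"
  assumes "cmod z > 3 * norm \<xi> + 1"
  shows "F z > F 0"
proof -
  define c where "c = cmod z"
  define t where "t = norm \<xi>"
  define X where "X = poly (map_poly of_real (conj_pair_poly z)) \<xi>"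
  have t0: "t \<ge> 0" by (simp add: t_def)
  have "of_real ((cmod z)^2) = (X - \<xi>*\<xi>) + of_real (2*Re z) * \<xi>"
    by (simp add: poly_conj_pair_poly X_def)
  then have "norm (of_real ((cmod z)^2) :: 'k) \<le> norm (X - \<xi>*\<xi>) + norm (of_real (2*Re z) * \<xi>)"
    by (metis norm_triangle_ineq)
  also have "norm (X - \<xi>*\<xi>) \<le> norm X + norm (\<xi>*\<xi>)"
    by (rule norm_triangle_ineq4)
  finally have "c^2 \<le> F z + t^2 + 2*\<bar>Re z\<bar>*t"
    by (simp add: F_def X_def c_def t_def norm_mult power2_eq_square)
  moreover have "2*\<bar>Re z\<bar>*t \<le> 2*c*t"
    using abs_Re_le_cmod[of z] t0 by (simp add: c_def mult_right_mono)
  moreover have "c*(c-2*t) \<ge> (3*t+1)*(t+1)"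
    using assms t0 by (intro mult_mono) (auto simp: c_def t_def)
  moreover have "c^2 - 2*c*t = c*(c-2*t)" "(3*t+1)*(t+1) = 3*t^2+4*t+1"
    by (simp_all add: algebra_simps power2_eq_square)
  ultimately have "F z > t^2"
    using t0 by (smt (verit) zero_le_power2)
  then show ?thesis by (simp add: F_def poly_conj_pair_poly t_def norm_mult power2_eq_square)
qed

lemma conj_pair_poly_eval_min_max_modulus:
  fixes \<xi> :: "'k::real_normed_field"
  defines "F \<equiv> \<lambda>z. norm (poly (map_poly of_real (conj_pair_poly z)) \<xi>)"
  obtains z0 where "\<And>z. F z0 \<le> F z" "\<And>z. F z = F z0 \<Longrightarrow> cmod z \<le> cmod z0"
proof -
  define Rr where "Rr = 3 * norm \<xi> + 1"
  have Rr: "Rr \<ge> 0" by (simp add: Rr_def)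
  have far: "F z > F 0" if "cmod z > Rr" for z
    using conj_pair_poly_eval_coercive that by (simp add: F_def Rr_def)
  have contF: "continuous_on UNIV F"
    unfolding F_def poly_conj_pair_poly by (intro continuous_intros)
  obtain zm where zm: "zm \<in> cball 0 Rr" "\<And>y. y \<in> cball 0 Rr \<Longrightarrow> F zm \<le> F y"
    using continuous_attains_inf[of "cball 0 Rr" F] continuous_on_subset[OF contF] Rr by auto
  have min: "F zm \<le> F z" for z
  proof (cases "cmod z \<le> Rr")
    case False
    then have "F z > F 0" using far by simp
    moreover have "F zm \<le> F 0" using zm Rr by simp
    ultimately show ?thesis by simp
  qed (use zm in simp)
  define S where "S = {z. F z = F zm}"
  have "S \<subseteq> cball 0 Rr"
  proof
    fix z assume "z \<in> S"
    then have "F z \<le> F 0" using min[of 0] by (simp add: S_def)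
    then show "z \<in> cball 0 Rr" using far[of z] by force
  qed
  moreover have "closed S"
    unfolding S_def by (rule closed_Collect_eq[OF contF]) simp
  ultimately have "compact S"
    by (metis compact_cball compact_Int_closed inf.absorb_iff2)
  moreover have "zm \<in> S" by (simp add: S_def)
  ultimately obtain z0 where "z0 \<in> S" "\<And>y. y \<in> S \<Longrightarrow> cmod y \<le> cmod z0"
    using continuous_attains_sup[of S cmod] continuous_on_norm_id by blast
  then have "F z0 = F zm" and max: "\<And>z. F z = F z0 \<Longrightarrow> cmod z \<le> cmod z0"
    by (auto simp: S_def)
  with min have "\<And>z. F z0 \<le> F z" by simp
  then show ?thesis using max by (rule that)
qed

lemma le_of_power_half_bound:
  fixes x m :: real
  assumes m: "m > 0" and bound: "\<And>n. n \<ge> 1 \<Longrightarrow> x * m ^ (2*n - 1) \<le> (m^n + (m / 2)^n)^2"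
  shows "x \<le> m"
proof -
  have "x \<le> m * (1 + (1/2)^n)^2" if "n \<ge> 1" for n
  proof -
    have "2*n = Suc (2*n - 1)" using that by simp
    then have "m ^ (2*n - 1) * m = (m^n)^2"
      by (metis power_Suc2 power_even_eq)
    then have "(m^n + (m / 2)^n)^2 = m ^ (2*n - 1) * (m * (1 + (1/2)^n)^2)"
      by (simp add: power_divide algebra_simps power2_eq_square)
    then show ?thesis
      using bound[OF that] m by (simp add: mult.commute)
  qed
  moreover have "(\<lambda>n. m * (1 + (1/2::real)^n)^2) \<longlonglongrightarrow> m * (1 + 0)^2"
    by (intro tendsto_intros LIMSEQ_realpow_zero) auto
  ultimately show ?thesis
    using LIMSEQ_le_const[of _ "m * (1 + 0)^2" x] by force
qed

lemma real_normed_field_conj_pair_root: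
  fixes \<xi> :: "'k::real_normed_field"
  shows "\<exists>z. poly (map_poly of_real (conj_pair_poly z)) \<xi> = 0"
proof -
  define F where "F = (\<lambda>z. norm (poly (map_poly of_real (conj_pair_poly z)) \<xi>))"
  obtain z0 where min: "\<And>z. F z0 \<le> F z" and maxz0: "\<And>z. F z = F z0 \<Longrightarrow> cmod z \<le> cmod z0"
    using conj_pair_poly_eval_min_max_modulus unfolding F_def by blast
  define m where "m = F z0"
  show ?thesis
  proof (cases "m = 0")
    case True
    then show ?thesis by (auto simp: F_def m_def)
  next
    case False
    then have mpos: "m > 0" by (simp add: m_def F_def)
    \<comment> \<open>z1 has larger modulus than z0, so F z1 > m by the choice of z0, while the
        bound of conj_pair_poly_min_power_bound forces F z1 \<le> m\<close>
    define \<epsilon> where "\<epsilon> = m/2"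
    have epos: "\<epsilon> > 0" using mpos by (simp add: \<epsilon>_def)
    define z1 where "z1 = Complex (Re z0) (sqrt ((Im z0)^2 + \<epsilon>))"
    have root: "poly (map_poly of_real (conj_pair_poly z0)) z1 = - complex_of_real \<epsilon>"
      unfolding poly_conj_pair_poly z1_def using epos cmod_power2[of z0]
      by (simp add: complex_eq_iff power2_eq_square)
    have "(cmod z1)^2 = (cmod z0)^2 + \<epsilon>"
      using epos by (simp add: z1_def cmod_power2)
    then have "cmod z1 > cmod z0"
      using epos by (metis less_add_same_cancel1 norm_ge_zero power_less_imp_less_base)
    then have gt: "F z1 > m"
      using maxz0[of z1] min[of z1] by (fastforce simp: m_def)
    have "F z1 * m ^ (2*n - 1) \<le> (m^n + (m / 2)^n)^2" if "n \<ge> 1" for n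
      using conj_pair_poly_min_power_bound[OF that mpos _ _ epos root] min
      unfolding F_def m_def \<epsilon>_def by blast
    then have "F z1 \<le> m" by (rule le_of_power_half_bound[OF mpos])
    with gt show ?thesis by simp
  qed
qed

lemma real_normed_field_shifted_square:
  fixes \<xi> :: "'k::real_normed_field"
  obtains a b where "(\<xi> - of_real a) * (\<xi> - of_real a) = - (of_real b * of_real b)"
proof -
  obtain z where "poly (map_poly of_real (conj_pair_poly z)) \<xi> = 0"
    using real_normed_field_conj_pair_root by blast
  moreover have "(of_real ((cmod z)^2) :: 'k) = of_real (Re z) * of_real (Re z) + of_real (Im z) * of_real (Im z)"
    by (subst cmod_power2) (simp add: power2_eq_square)
  ultimately have "(\<xi> - of_real (Re z)) * (\<xi> - of_real (Re z)) + of_real (Im z) * of_real (Im z) = 0"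
    by (simp add: poly_conj_pair_poly algebra_simps)
  then show ?thesis
    using that by (simp add: eq_neg_iff_add_eq_0)
qed

lemma real_normed_field_imaginary_unit:
  fixes \<xi>0 :: "'k::real_normed_field"
  assumes "\<xi>0 \<notin> range of_real"
  obtains j :: 'k where "j * j = -1" "\<And>\<xi>. \<exists>u v. \<xi> = of_real u + of_real v * j"
proof -
  have unit: "(\<xi> - of_real a) / of_real b * ((\<xi> - of_real a) / of_real b) = -1"
    if "(\<xi> - of_real a) * (\<xi> - of_real a) = - (of_real b * of_real b)" "b \<noteq> 0"
    for \<xi> :: 'k and a b
    using that by (simp add: field_simps)
  obtain a b where ab: "(\<xi>0 - of_real a) * (\<xi>0 - of_real a) = - (of_real b * of_real b)"
    using real_normed_field_shifted_square by blast
  have "b \<noteq> 0"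
    using ab assms by (auto simp: diff_eq_eq)
  define j where "j = (\<xi>0 - of_real a) / of_real b"
  have jj: "j * j = -1"
    using unit[OF ab \<open>b \<noteq> 0\<close>] by (simp add: j_def)
  have "\<exists>u v. \<xi> = of_real u + of_real v * j" for \<xi> :: 'k
  proof -
    obtain a' b' where ab': "(\<xi> - of_real a') * (\<xi> - of_real a') = - (of_real b' * of_real b')"
      using real_normed_field_shifted_square by blast
    show ?thesis
    proof (cases "b' = 0")
      case True
      then have "\<xi> = of_real a' + of_real 0 * j" using ab' by simp
      then show ?thesis by blast
    next
      case False
      define w where "w = (\<xi> - of_real a') / of_real b'"
      \<comment> \<open>a field has at most two square roots of -1\<close>
      have "(w - j) * (w + j) = 0"
        using unit[OF ab' False] jj by (simp add: w_def algebra_simps)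
      then have "w = j \<or> w = -j" by (auto simp: eq_neg_iff_add_eq_0)
      then have "\<xi> = of_real a' + of_real b' * j \<or> \<xi> = of_real a' + of_real (-b') * j"
        using False by (auto simp: w_def field_simps)
      then show ?thesis by blast
    qed
  qed
  then show ?thesis using that jj by blast
qed

lemma cmod_le_norm_imaginary_unit_combination:
  fixes j :: "'k::real_normed_field"
  assumes jj: "j * j = -1"
  shows "cmod (Complex u v) \<le> 2 * norm (of_real u + of_real v * j)"
proof -
  define z where "z = Complex u v"
  define \<xi> where "\<xi> = of_real u + of_real v * j"
  have "norm j = 1"
    using arg_cong[OF jj, of norm] by (simp add: norm_mult) (metis abs_norm_cancel power2_eq_square real_sqrt_abs real_sqrt_one)
  have "\<xi> * (of_real u - of_real v * j) = of_real (u^2 + v^2)"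
  proof -
    have jjx: "j * (j * x) = - x" for x using jj by (simp add: mult.assoc[symmetric])
    show ?thesis by (simp add: \<xi>_def algebra_simps power2_eq_square jjx)
  qed
  also have "u^2 + v^2 = (cmod z)^2" by (simp add: z_def cmod_power2)
  finally have "(cmod z)^2 = norm \<xi> * norm (of_real u - of_real v * j :: 'k)"
    by (metis norm_mult norm_of_real abs_of_nonneg zero_le_power2)
  also have "\<dots> \<le> norm \<xi> * (2 * cmod z)"
  proof (intro mult_left_mono)
    have "norm (of_real u - of_real v * j :: 'k) \<le> \<bar>u\<bar> + \<bar>v\<bar>"
      using norm_triangle_ineq4[of "of_real u :: 'k" "of_real v * j"] \<open>norm j = 1\<close> by (simp add: norm_mult)
    also have "\<dots> \<le> 2 * cmod z"
      using abs_Re_le_cmod[of z] abs_Im_le_cmod[of z] by (simp add: z_def)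
    finally show "norm (of_real u - of_real v * j :: 'k) \<le> 2 * cmod z" .
  qed simp
  finally show ?thesis
    unfolding z_def \<xi>_def[symmetric]
    by (cases "Complex u v = 0") (auto simp: power2_eq_square mult.commute mult.left_commute)
qed

lemma real_normed_field_complex_param:
  obtains h :: "complex \<Rightarrow> 'k::real_normed_field"
  where "continuous_on UNIV h" "\<And>\<xi>. \<exists>z. h z = \<xi> \<and> cmod z \<le> 2 * norm \<xi>"
proof (cases "range (of_real :: real \<Rightarrow> 'k) = UNIV")
  case True
  show ?thesis
  proof (rule that[of "\<lambda>z. of_real (Re z)"])
    fix \<xi> :: 'k
    obtain r where "\<xi> = of_real r" using True by (metis rangeE UNIV_I)
    then show "\<exists>z. of_real (Re z) = \<xi> \<and> cmod z \<le> 2 * norm \<xi>"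
      by (intro exI[of _ "complex_of_real r"]) simp
  qed (intro continuous_intros)
next
  case False
  then obtain j :: 'k where jj: "j * j = -1" and rep: "\<And>\<xi>. \<exists>u v. \<xi> = of_real u + of_real v * j"
    using real_normed_field_imaginary_unit by blast
  show ?thesis
  proof (rule that[of "\<lambda>z. of_real (Re z) + of_real (Im z) * j"])
    fix \<xi> :: 'k
    obtain u v where "\<xi> = of_real u + of_real v * j" using rep by blast
    then show "\<exists>z. of_real (Re z) + of_real (Im z) * j = \<xi> \<and> cmod z \<le> 2 * norm \<xi>"
      using cmod_le_norm_imaginary_unit_combination[OF jj, of u v]
      by (intro exI[of _ "Complex u v"]) simp
  qed (intro continuous_intros)
qed

lemma compact_cball_real_normed_field: "compact (cball (0 :: 'k::real_normed_field) B)"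
proof -
  obtain h :: "complex \<Rightarrow> 'k" where h: "continuous_on UNIV h" "\<And>\<xi>. \<exists>z. h z = \<xi> \<and> cmod z \<le> 2 * norm \<xi>"
    using real_normed_field_complex_param by blast
  have "cball 0 B \<subseteq> h ` cball 0 (2*B)"
  proof
    fix \<xi> :: 'k assume "\<xi> \<in> cball 0 B"
    moreover obtain z where "h z = \<xi>" "cmod z \<le> 2 * norm \<xi>" using h(2) by blast
    ultimately show "\<xi> \<in> h ` cball 0 (2*B)" by force
  qed
  moreover have "compact (h ` cball 0 (2*B))"
    by (rule compact_continuous_image) (auto intro: continuous_on_subset[OF h(1)])
  ultimately show ?thesis
    by (metis compact_Int_closed closed_cball inf.absorb_iff2 inf_commute)
qed

lemma bounded_seq_convergent_subseq_real_normed_field: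
  fixes s :: "nat \<Rightarrow> 'k::real_normed_field"
  assumes "\<And>n. norm (s n) \<le> B"
  obtains r where "strict_mono r" "convergent (s \<circ> r)"
proof -
  have "seq_compact (cball (0::'k) B)"
    by (rule compact_imp_seq_compact[OF compact_cball_real_normed_field])
  then obtain l r where "strict_mono r" "(s \<circ> r) \<longlonglongrightarrow> l"
    using assms unfolding seq_compact_def by (metis mem_cball_0)
  then show ?thesis using that by (auto simp: convergent_def)
qed

lemma finite_family_convergent_subseq:
  fixes x :: "'g \<Rightarrow> nat \<Rightarrow> 'k::real_normed_field"
  assumes "finite G" "\<And>g. g \<in> G \<Longrightarrow> \<exists>B. \<forall>n. norm (x g n) \<le> B"
  shows "\<exists>r. strict_mono r \<and> (\<forall>g\<in>G. convergent (\<lambda>n. x g (r n)))"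
  using assms
proof (induction G rule: finite_induct)
  case empty
  then show ?case by (intro exI[of _ id]) (auto simp: strict_mono_def)
next
  case (insert g G)
  obtain r where r: "strict_mono r" "\<forall>g\<in>G. convergent (\<lambda>n. x g (r n))" using insert by blast
  obtain B where "\<forall>n. norm (x g n) \<le> B" using insert.prems by blast
  then obtain r' where r': "strict_mono r'" "convergent ((\<lambda>n. x g (r n)) \<circ> r')"
    using bounded_seq_convergent_subseq_real_normed_field[of "\<lambda>n. x g (r n)" B] by blast
  have "convergent (\<lambda>n. x g' (r (r' n)))" if "g' \<in> G" for g'
    using r(2) that convergent_subseq_convergent[OF _ r'(1), of "\<lambda>n. x g' (r n)"] by (simp add: o_def)
  then show ?case
    using r r' strict_mono_o[OF r(1) r'(1)] by (intro exI[of _ "r \<circ> r'"]) (auto simp: o_def)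
qed

lemma finite_net_on_finite_set:
  fixes A :: "('b \<Rightarrow> 'k::real_normed_field) set"
  assumes Z: "finite Z" and bound: "\<forall>g\<in>A. \<forall>z\<in>Z. norm (g z) \<le> B" and "\<eta> > 0"
  obtains G where "finite G" "G \<subseteq> A" "\<And>g. g \<in> A \<Longrightarrow> \<exists>g'\<in>G. \<forall>z\<in>Z. norm (g z - g' z) < \<eta>"
proof -
  have "seq_compact (cball (0::'k) B)"
    by (rule compact_imp_seq_compact[OF compact_cball_real_normed_field])
  then obtain C where C: "finite C" "cball (0::'k) B \<subseteq> (\<Union>c\<in>C. ball c (\<eta>/2))"
    using seq_compact_imp_totally_bounded \<open>\<eta> > 0\<close> by (metis half_gt_zero)
  then have "\<forall>v\<in>cball 0 B. \<exists>c. c \<in> C \<and> dist c v < \<eta>/2"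
    by (fastforce simp: dist_commute)
  then obtain near where near: "\<And>v. v \<in> cball 0 B \<Longrightarrow> near v \<in> C \<and> dist (near v) v < \<eta>/2"
    by metis
  \<comment> \<open>functions with the same code are within \<eta> of each other on Z\<close>
  define code where "code = (\<lambda>g. restrict (\<lambda>z. near (g z)) Z)"
  define rep where "rep = (\<lambda>\<phi>. SOME g. g \<in> A \<and> code g = \<phi>)"
  have code: "code g \<in> PiE Z (\<lambda>_. C)" and close: "\<forall>z\<in>Z. dist (code g z) (g z) < \<eta>/2"
    if "g \<in> A" for g
    using near bound that by (simp_all add: code_def PiE_iff)
  have rep: "rep (code g) \<in> A \<and> code (rep (code g)) = code g" if "g \<in> A" for g
    unfolding rep_def by (rule someI[of _ g]) (simp add: that)
  show ?thesis
  proof (rule that[of "rep ` code ` A"])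
    have "code ` A \<subseteq> PiE Z (\<lambda>_. C)" using code by blast
    then show "finite (rep ` code ` A)"
      using C(1) Z by (metis finite_PiE finite_imageI finite_subset)
    show "rep ` code ` A \<subseteq> A" using rep by blast
    fix g assume g: "g \<in> A"
    have "norm (g z - rep (code g) z) < \<eta>" if "z \<in> Z" for z
    proof -
      have "dist (code g z) (g z) < \<eta>/2" "dist (code g z) (rep (code g) z) < \<eta>/2"
        using close[OF g] close[of "rep (code g)"] rep[OF g] that by auto
      then show ?thesis
        using dist_triangle3[of "g z" "rep (code g) z" "code g z"] by (simp add: dist_norm)
    qed
    then show "\<exists>g'\<in>rep ` code ` A. \<forall>z\<in>Z. norm (g z - g' z) < \<eta>" using g by blast
  qed
qed

lemma diagonal_convergent_subseq:
  fixes x :: "'g \<Rightarrow> nat \<Rightarrow> 'k::real_normed_field" and Gs :: "nat \<Rightarrow> 'g set"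
  assumes "\<And>j. finite (Gs j)" "\<And>j g. g \<in> Gs j \<Longrightarrow> \<exists>B. \<forall>n. norm (x g n) \<le> B"
  obtains r where "strict_mono r" "\<And>j g. g \<in> Gs j \<Longrightarrow> convergent (\<lambda>n. x g (r n))"
proof -
  define P where "P = (\<lambda>j (s::nat \<Rightarrow> nat). \<forall>g\<in>Gs j. convergent (\<lambda>n. x g (s n)))"
  interpret subseqs P
  proof
    fix j and s :: "nat \<Rightarrow> nat"
    obtain r where "strict_mono r" "\<forall>g\<in>Gs j. convergent (\<lambda>n. x g (s (r n)))"
      using finite_family_convergent_subseq[of "Gs j" "\<lambda>g n. x g (s n)"] assms by blast
    then show "\<exists>r. strict_mono r \<and> P j (s \<circ> r)" by (auto simp: P_def)
  qed
  have "P j (s \<circ> r)" if "strict_mono r" "P j s" for j s r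
    using that convergent_subseq_convergent by (fastforce simp: P_def o_def)
  then have "P j (diagseq \<circ> ((+) (Suc j)))" for j
    by (rule diagseq_holds)
  moreover have "(\<lambda>n. x g (diagseq (n + Suc j))) = (\<lambda>n. x g ((diagseq \<circ> (+) (Suc j)) n))" for g j
    by (rule ext) (metis add.commute comp_apply)
  ultimately have "convergent (\<lambda>n. x g (diagseq (n + Suc j)))" if "g \<in> Gs j" for j g
    using that by (simp add: P_def)
  then have "convergent (\<lambda>n. x g (diagseq n))" if "g \<in> Gs j" for j g
    using that convergent_ignore_initial_segment[of "\<lambda>n. x g (diagseq n)" "Suc j"] by simp
  then show ?thesis using that subseq_diagseq by blast
qed

section \<open>Lipschitz duals and the free space\<close>

lemma zero_in_Lip0_ball: "(\<lambda>x. 0) \<in> Lip0_ball p"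
  by (simp add: Lip0_ball_def lipschitz_on_def)

lemma Lip0_ball_subset_Lip0: "Lip0_ball p \<subseteq> Lip0 p"
  by (auto simp: Lip0_ball_def Lip0_def)

lemma Lip0_ball_norm_diff_le:
  assumes "g \<in> Lip0_ball p" shows "norm (g a - g b) \<le> dist a b"
  using assms lipschitz_onD[of 1 UNIV g a b] by (simp add: Lip0_ball_def dist_norm)

lemma Lip0_ball_norm_le:
  assumes "g \<in> Lip0_ball p" shows "norm (g x) \<le> dist x p"
  using Lip0_ball_norm_diff_le[OF assms, of x p] assms by (simp add: Lip0_ball_def)

lemma Lip0_comp:
  assumes "g \<in> Lip0 q" "L-lipschitz_on UNIV f" "f p = q"
  shows "(\<lambda>x. g (f x)) \<in> Lip0 p"
proof -
  obtain D where "D-lipschitz_on UNIV g" "g q = 0" using assms(1) unfolding Lip0_def by blast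
  then show ?thesis
    using lipschitz_on_compose2[OF assms(2) lipschitz_on_subset[of D UNIV g]] assms(3)
    by (auto simp: Lip0_def)
qed

lemma Lip0_lincomb:
  fixes g h :: "'a::metric_space \<Rightarrow> 'k::real_normed_field"
  assumes "g \<in> Lip0 q" "h \<in> Lip0 q"
  shows "(\<lambda>x. c * g x + h x) \<in> Lip0 q"
proof -
  obtain D E where D: "D-lipschitz_on UNIV g" and E: "E-lipschitz_on UNIV h" and "g q = 0" "h q = 0"
    using assms unfolding Lip0_def by blast
  have "(norm c * D)-lipschitz_on UNIV (\<lambda>x. c * g x)"
  proof (rule lipschitz_onI)
    fix x y
    have "dist (c * g x) (c * g y) = norm c * dist (g x) (g y)"
      by (simp add: dist_norm right_diff_distrib[symmetric] norm_mult)
    also have "\<dots> \<le> norm c * (D * dist x y)"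
      using lipschitz_onD[OF D] by (simp add: mult_left_mono)
    finally show "dist (c * g x) (c * g y) \<le> norm c * D * dist x y" by (simp add: mult.assoc)
  qed (use lipschitz_on_nonneg[OF D] in simp)
  then have "(norm c * D + E)-lipschitz_on UNIV (\<lambda>x. c * g x + h x)"
    using E by (rule lipschitz_on_add)
  then show ?thesis
    using \<open>g q = 0\<close> \<open>h q = 0\<close> unfolding Lip0_def by auto
qed

lemma Lip0_dual_minus:
  assumes "\<phi> \<in> Lip0_dual p" "g \<in> Lip0 p" "h \<in> Lip0 p"
  shows "\<phi> (\<lambda>x. g x - h x) = \<phi> g - \<phi> h"
  using assms unfolding Lip0_dual_def by (force dest: spec[of _ "-1"])

lemma Lip0_dual_zero:
  assumes "\<phi> \<in> Lip0_dual p" shows "\<phi> (\<lambda>x. 0) = 0"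
  using Lip0_dual_minus[OF assms, of "\<lambda>x. 0" "\<lambda>x. 0"] Lip0_ball_subset_Lip0 zero_in_Lip0_ball
  by auto

lemma Lip0_dual_diff:
  assumes "\<phi> \<in> Lip0_dual p" "\<psi> \<in> Lip0_dual p"
  shows "\<phi> - \<psi> \<in> Lip0_dual p"
proof -
  obtain C1 C2 where "\<forall>g\<in>Lip0_ball p. norm (\<phi> g) \<le> C1" "\<forall>g\<in>Lip0_ball p. norm (\<psi> g) \<le> C2"
    using assms unfolding Lip0_dual_def by blast
  then have "\<forall>g\<in>Lip0_ball p. norm ((\<phi> - \<psi>) g) \<le> C1 + C2"
    by (auto intro: order_trans[OF norm_triangle_ineq4] add_mono)
  moreover have "(\<phi> - \<psi>) (\<lambda>x. c * g x + h x) = c * (\<phi> - \<psi>) g + (\<phi> - \<psi>) h"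
    if "g \<in> Lip0 p" "h \<in> Lip0 p" for c g h
    using assms that unfolding Lip0_dual_def by (simp add: algebra_simps)
  ultimately show ?thesis unfolding Lip0_dual_def by blast
qed

lemma delta_span_subset_Lip0_dual:
  "(delta_span :: (('a::metric_space \<Rightarrow> 'k::real_normed_field) \<Rightarrow> 'k) set) \<subseteq> Lip0_dual p"
proof
  fix \<psi> :: "('a \<Rightarrow> 'k) \<Rightarrow> 'k" assume "\<psi> \<in> delta_span"
  then obtain n :: nat and c xs where \<psi>: "\<psi> = (\<lambda>g. \<Sum>i<n. c i * delta (xs i) g)"
    unfolding delta_span_def by blast
  have "norm (\<psi> g) \<le> (\<Sum>i<n. norm (c i) * dist (xs i) p)" if "g \<in> Lip0_ball p" for g
  proof -
    have "norm (\<psi> g) \<le> (\<Sum>i<n. norm (c i * g (xs i)))" by (simp add: \<psi> delta_def norm_sum)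
    also have "\<dots> \<le> (\<Sum>i<n. norm (c i) * dist (xs i) p)"
      using Lip0_ball_norm_le[OF that] by (intro sum_mono) (simp add: norm_mult mult_left_mono)
    finally show ?thesis .
  qed
  moreover have "\<psi> (\<lambda>x. c' * g x + h x) = c' * \<psi> g + \<psi> h" for c' g h
    by (simp add: \<psi> delta_def sum.distrib sum_distrib_left algebra_simps)
  ultimately show "\<psi> \<in> Lip0_dual p" unfolding Lip0_dual_def by blast
qed

lemma norm_le_dual_norm:
  assumes "\<phi> \<in> Lip0_dual p" "g \<in> Lip0_ball p"
  shows "norm (\<phi> g) \<le> dual_norm p \<phi>"
  using assms unfolding dual_norm_def Lip0_dual_def
  by (intro cSUP_upper) (auto simp: bdd_above_def)

lemma dual_norm_leI:
  assumes "\<And>g. g \<in> Lip0_ball p \<Longrightarrow> norm (\<phi> g) \<le> B"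
  shows "dual_norm p \<phi> \<le> B"
  unfolding dual_norm_def using zero_in_Lip0_ball by (blast intro: cSUP_least assms)

lemma dual_norm_nonneg:
  assumes "\<phi> \<in> Lip0_dual p" shows "0 \<le> dual_norm p \<phi>"
  using norm_le_dual_norm[OF assms zero_in_Lip0_ball] norm_ge_zero order_trans by blast

lemma dual_norm_diff_le:
  fixes \<phi> \<psi> :: "('a::metric_space \<Rightarrow> 'k::real_normed_field) \<Rightarrow> 'k"
  assumes "\<phi> \<in> Lip0_dual p" "\<psi> \<in> Lip0_dual p"
  shows "dual_norm p (\<phi> - \<psi>) \<le> dual_norm p \<phi> + dual_norm p \<psi>"
proof (rule dual_norm_leI)
  fix g :: "'a \<Rightarrow> 'k" assume "g \<in> Lip0_ball p"
  then show "norm ((\<phi> - \<psi>) g) \<le> dual_norm p \<phi> + dual_norm p \<psi>"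
    using norm_le_dual_norm[OF assms(1)] norm_le_dual_norm[OF assms(2)] norm_triangle_ineq4[of "\<phi> g" "\<psi> g"]
    by (simp add: add_mono order_trans)
qed

lemma norm_le_lipschitz_dual_norm:
  fixes w :: "'a::metric_space \<Rightarrow> 'k::real_normed_field"
  assumes \<phi>: "\<phi> \<in> Lip0_dual p" and C: "C > 0" and w: "C-lipschitz_on UNIV w" "w p = 0"
  shows "norm (\<phi> w) \<le> C * dual_norm p \<phi>"
proof -
  define w' where "w' = (\<lambda>x. w x / of_real C)"
  have "1-lipschitz_on UNIV w'"
  proof (rule lipschitz_onI)
    fix x y
    have "dist (w' x) (w' y) = dist (w x) (w y) / C"
      using C by (simp add: w'_def dist_norm diff_divide_distrib[symmetric] norm_divide)
    also have "\<dots> \<le> 1 * dist x y"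
      using lipschitz_onD[OF w(1)] C by (simp add: divide_le_eq mult.commute)
    finally show "dist (w' x) (w' y) \<le> 1 * dist x y" .
  qed simp
  then have w'_ball: "w' \<in> Lip0_ball p"
    using C w(2) by (simp add: Lip0_ball_def w'_def)
  have "\<phi> (\<lambda>x. of_real C * w' x + 0) = of_real C * \<phi> w' + \<phi> (\<lambda>x. 0)"
    using \<phi> w'_ball zero_in_Lip0_ball Lip0_ball_subset_Lip0 unfolding Lip0_dual_def by blast
  moreover have "(\<lambda>x. of_real C * w' x + 0) = w" using C by (simp add: w'_def)
  ultimately have "\<phi> w = of_real C * \<phi> w'" using Lip0_dual_zero[OF \<phi>] by simp
  then show ?thesis
    using C norm_le_dual_norm[OF \<phi> w'_ball] by (simp add: norm_mult mult_left_mono)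
qed

lemma lift_apply: "lift f \<mu> g = \<mu> (\<lambda>x. g (f x))"
  by (simp add: lift_def o_def)

lemma lift_diff: "lift f (\<mu> - \<psi>) = lift f \<mu> - lift f \<psi>"
  by (simp add: lift_def fun_eq_iff)

lemma lift_delta_span:
  assumes "\<psi> \<in> delta_span" shows "lift f \<psi> \<in> delta_span"
proof -
  obtain n :: nat and c xs where "\<psi> = (\<lambda>g. \<Sum>i<n. c i * delta (xs i) g)"
    using assms unfolding delta_span_def by blast
  then have "lift f \<psi> = (\<lambda>g. \<Sum>i<n. c i * delta ((f \<circ> xs) i) g)"
    by (simp add: lift_def delta_def)
  then show ?thesis unfolding delta_span_def by blast
qed

context
  fixes f :: "'a::metric_space \<Rightarrow> 'b::metric_space" and L :: real and p :: 'a and q :: 'b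
  assumes L: "L > 0" and f_lip: "L-lipschitz_on UNIV f" and base: "f p = q"
begin

lemma Lip0_ball_comp_lipschitz: "g \<in> Lip0_ball q \<Longrightarrow> L-lipschitz_on UNIV (\<lambda>x. g (f x))"
  using lipschitz_on_compose2[OF f_lip lipschitz_on_subset[of 1 UNIV g]] by (simp add: Lip0_ball_def)

lemma norm_lift_le:
  assumes "\<mu> \<in> Lip0_dual p" "g \<in> Lip0_ball q"
  shows "norm (lift f \<mu> g) \<le> L * dual_norm p \<mu>"
  using norm_le_lipschitz_dual_norm[OF assms(1) L Lip0_ball_comp_lipschitz[OF assms(2)]] assms(2) base
  by (simp add: lift_apply Lip0_ball_def)

lemma lift_Lip0_dual:
  assumes \<mu>: "(\<mu> :: ('a \<Rightarrow> 'k::real_normed_field) \<Rightarrow> 'k) \<in> Lip0_dual p"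
  shows "lift f \<mu> \<in> Lip0_dual q"
proof -
  have "lift f \<mu> (\<lambda>x. c * g x + h x) = c * lift f \<mu> g + lift f \<mu> h"
    if "g \<in> Lip0 q" "h \<in> Lip0 q" for c g h
    using \<mu> Lip0_comp[OF that(1) f_lip base] Lip0_comp[OF that(2) f_lip base]
    unfolding Lip0_dual_def lift_apply by blast
  then show ?thesis
    using norm_lift_le[OF \<mu>] unfolding Lip0_dual_def by blast
qed

lemma dual_norm_lift_le:
  assumes "\<mu> \<in> Lip0_dual p"
  shows "dual_norm q (lift f \<mu>) \<le> L * dual_norm p \<mu>"
  using norm_lift_le[OF assms] by (rule dual_norm_leI)

lemma lift_FreeSp:
  assumes \<mu>: "(\<mu> :: ('a \<Rightarrow> 'k::real_normed_field) \<Rightarrow> 'k) \<in> FreeSp p"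
  shows "lift f \<mu> \<in> FreeSp q"
proof -
  have "\<exists>\<psi>\<in>delta_span. dual_norm q (lift f \<mu> - \<psi>) < e" if "e > 0" for e
  proof -
    have "e / L > 0" using \<open>e > 0\<close> L by simp
    then obtain \<psi> where \<psi>: "\<psi> \<in> delta_span" "dual_norm p (\<mu> - \<psi>) < e / L"
      using \<mu> unfolding FreeSp_def by blast
    have "\<mu> - \<psi> \<in> Lip0_dual p"
      using \<mu> \<psi>(1) delta_span_subset_Lip0_dual by (auto simp: FreeSp_def intro: Lip0_dual_diff)
    then have "dual_norm q (lift f \<mu> - lift f \<psi>) \<le> L * dual_norm p (\<mu> - \<psi>)"
      by (metis dual_norm_lift_le lift_diff)
    also have "\<dots> < e" using \<psi>(2) L by (simp add: field_simps)
    finally show ?thesis using lift_delta_span[OF \<psi>(1)] by blast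
  qed
  moreover have "lift f \<mu> \<in> Lip0_dual q"
    using \<mu> by (intro lift_Lip0_dual) (simp add: FreeSp_def)
  ultimately show ?thesis by (simp add: FreeSp_def)
qed

end

definition dual_norm_Cauchy :: "'b::metric_space \<Rightarrow> (nat \<Rightarrow> ('b \<Rightarrow> 'k::real_normed_field) \<Rightarrow> 'k) \<Rightarrow> bool" where
  "dual_norm_Cauchy q S \<longleftrightarrow> (\<forall>e>0. \<exists>N. \<forall>n\<ge>N. \<forall>m\<ge>N. dual_norm q (S n - S m) \<le> e)"

lemma dual_norm_Cauchy_pointwise:
  assumes S: "\<And>n. S n \<in> Lip0_dual q" and "dual_norm_Cauchy q S" and g: "g \<in> Lip0 q"
  shows "Cauchy (\<lambda>n. S n g)"
proof (rule metric_CauchyI)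
  fix e :: real assume "e > 0"
  obtain D where "D-lipschitz_on UNIV g" and g0: "g q = 0" using g unfolding Lip0_def by blast
  then have D: "(D + 1)-lipschitz_on UNIV g" "D + 1 > 0"
    using lipschitz_on_nonneg[of D UNIV g] lipschitz_on_mono[of D UNIV g UNIV "D + 1"] by auto
  obtain N where N: "\<forall>n\<ge>N. \<forall>m\<ge>N. dual_norm q (S n - S m) \<le> e / (2 * (D + 1))"
    using assms(2) \<open>e > 0\<close> D(2) unfolding dual_norm_Cauchy_def by (meson divide_pos_pos zero_less_mult_iff zero_less_numeral)
  have "dist (S m g) (S n g) < e" if "m \<ge> N" "n \<ge> N" for m n
  proof -
    have "norm ((S m - S n) g) \<le> (D + 1) * dual_norm q (S m - S n)"
      by (rule norm_le_lipschitz_dual_norm[OF Lip0_dual_diff[OF S S] D(2) D(1) g0])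
    also have "\<dots> \<le> (D + 1) * (e / (2 * (D + 1)))"
      using N that D(2) by (intro mult_left_mono) auto
    also have "\<dots> = e / 2" using D(2) by (simp add: field_simps)
    also have "\<dots> < e" using \<open>e > 0\<close> by simp
    finally show ?thesis by (simp add: dist_norm)
  qed
  then show "\<exists>M. \<forall>m\<ge>M. \<forall>n\<ge>M. dist (S m g) (S n g) < e" by blast
qed

lemma Lip0_dual_pointwise_limit:
  assumes S: "\<And>n. S n \<in> Lip0_dual q"
    and conv: "\<And>g. g \<in> Lip0 q \<Longrightarrow> (\<lambda>n. S n g) \<longlonglongrightarrow> \<nu> g"
    and bound: "\<And>g. g \<in> Lip0_ball q \<Longrightarrow> norm (\<nu> g) \<le> C"
  shows "\<nu> \<in> Lip0_dual q"
proof -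
  have "\<nu> (\<lambda>x. c * g x + h x) = c * \<nu> g + \<nu> h" if "g \<in> Lip0 q" "h \<in> Lip0 q" for c g h
  proof -
    have "(\<lambda>n. S n (\<lambda>x. c * g x + h x)) = (\<lambda>n. c * S n g + S n h)"
      using S that unfolding Lip0_dual_def by blast
    moreover have "(\<lambda>n. c * S n g + S n h) \<longlonglongrightarrow> c * \<nu> g + \<nu> h"
      using that by (intro tendsto_intros conv)
    ultimately have "(\<lambda>n. S n (\<lambda>x. c * g x + h x)) \<longlonglongrightarrow> c * \<nu> g + \<nu> h" by simp
    moreover have "(\<lambda>n. S n (\<lambda>x. c * g x + h x)) \<longlonglongrightarrow> \<nu> (\<lambda>x. c * g x + h x)"
      using that by (intro conv Lip0_lincomb)
    ultimately show ?thesis by (rule LIMSEQ_unique[rotated])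
  qed
  with bound show ?thesis unfolding Lip0_dual_def by blast
qed

lemma dual_norm_Cauchy_limit:
  fixes S :: "nat \<Rightarrow> ('b::metric_space \<Rightarrow> 'k::{real_normed_field,banach}) \<Rightarrow> 'k"
  assumes S: "\<And>n. S n \<in> Lip0_dual q" and Cauchy: "dual_norm_Cauchy q S"
  obtains \<nu> where "\<nu> \<in> Lip0_dual q" "(\<lambda>n. dual_norm q (S n - \<nu>)) \<longlonglongrightarrow> 0"
proof -
  define \<nu> where "\<nu> = (\<lambda>g. lim (\<lambda>n. S n g))"
  have conv: "(\<lambda>n. S n g) \<longlonglongrightarrow> \<nu> g" if "g \<in> Lip0 q" for g
    using dual_norm_Cauchy_pointwise[OF S Cauchy that]
    by (simp add: \<nu>_def Cauchy_convergent_iff convergent_LIMSEQ_iff)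
  have close: "norm (S n g - \<nu> g) \<le> e"
    if N: "\<forall>n\<ge>N. \<forall>m\<ge>N. dual_norm q (S n - S m) \<le> e" and "n \<ge> N" and g: "g \<in> Lip0_ball q"
    for e N n g
  proof -
    have "norm (S n g - S m g) \<le> e" if "m \<ge> N" for m
      using norm_le_dual_norm[OF Lip0_dual_diff[OF S S] g, of n m] N \<open>n \<ge> N\<close> that by fastforce
    moreover have "(\<lambda>m. norm (S n g - S m g)) \<longlonglongrightarrow> norm (S n g - \<nu> g)"
      using g Lip0_ball_subset_Lip0 by (intro tendsto_intros conv) auto
    ultimately show ?thesis by (intro LIMSEQ_le_const2) auto
  qed
  obtain N1 where N1: "\<forall>n\<ge>N1. \<forall>m\<ge>N1. dual_norm q (S n - S m) \<le> 1"
    using Cauchy unfolding dual_norm_Cauchy_def by (meson zero_less_one)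
  have "norm (\<nu> g) \<le> dual_norm q (S N1) + 1" if g: "g \<in> Lip0_ball q" for g
  proof -
    have "norm (\<nu> g) \<le> norm (S N1 g) + norm (S N1 g - \<nu> g)"
      using norm_triangle_ineq4[of "S N1 g" "S N1 g - \<nu> g"] by simp
    then show ?thesis
      using close[OF N1 order_refl g] norm_le_dual_norm[OF S g, of N1] by linarith
  qed
  with S conv have \<nu>: "\<nu> \<in> Lip0_dual q" by (rule Lip0_dual_pointwise_limit)
  have "(\<lambda>n. dual_norm q (S n - \<nu>)) \<longlonglongrightarrow> 0"
  proof (rule LIMSEQ_I)
    fix r :: real assume "r > 0"
    then obtain N where N: "\<forall>n\<ge>N. \<forall>m\<ge>N. dual_norm q (S n - S m) \<le> r / 2"
      using Cauchy unfolding dual_norm_Cauchy_def by (meson half_gt_zero)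
    have "norm (dual_norm q (S n - \<nu>) - 0) < r" if "n \<ge> N" for n
    proof -
      have "dual_norm q (S n - \<nu>) \<le> r / 2"
        using close[OF N that] by (intro dual_norm_leI) simp
      moreover have "0 \<le> dual_norm q (S n - \<nu>)"
        by (rule dual_norm_nonneg[OF Lip0_dual_diff[OF S \<nu>]])
      ultimately show ?thesis using \<open>r > 0\<close> by simp
    qed
    then show "\<exists>N. \<forall>n\<ge>N. norm (dual_norm q (S n - \<nu>) - 0) < r" by blast
  qed
  with \<nu> show ?thesis using that by blast
qed

lemma FreeSp_closed:
  assumes S: "\<And>n. S n \<in> FreeSp q" and \<nu>: "\<nu> \<in> Lip0_dual q"
    and lim: "(\<lambda>n. dual_norm q (S n - \<nu>)) \<longlonglongrightarrow> 0"
  shows "\<nu> \<in> FreeSp q"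
proof -
  have "\<exists>\<psi>\<in>delta_span. dual_norm q (\<nu> - \<psi>) < e" if "e > 0" for e
  proof -
    have "e / 2 > 0" using \<open>e > 0\<close> by simp
    then obtain N where "\<forall>n\<ge>N. norm (dual_norm q (S n - \<nu>) - 0) < e / 2"
      using LIMSEQ_D[OF lim] by blast
    then have n: "dual_norm q (S N - \<nu>) < e / 2" by auto
    obtain \<psi> where \<psi>: "\<psi> \<in> delta_span" "dual_norm q (S N - \<psi>) < e / 2"
      using S[of N] \<open>e / 2 > 0\<close> unfolding FreeSp_def by blast
    have SN: "S N \<in> Lip0_dual q" using S by (simp add: FreeSp_def)
    have "\<psi> \<in> Lip0_dual q" using \<psi>(1) delta_span_subset_Lip0_dual by blast
    then have "dual_norm q ((S N - \<psi>) - (S N - \<nu>)) \<le> dual_norm q (S N - \<psi>) + dual_norm q (S N - \<nu>)"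
      using Lip0_dual_diff SN \<nu> by (intro dual_norm_diff_le)
    moreover have "(S N - \<psi>) - (S N - \<nu>) = \<nu> - \<psi>" by (simp add: fun_eq_iff)
    ultimately show ?thesis using n \<psi> by force
  qed
  then show ?thesis using \<nu> by (simp add: FreeSp_def)
qed

lemma FreeSp_complete:
  fixes S :: "nat \<Rightarrow> ('b::metric_space \<Rightarrow> 'k::{real_normed_field,banach}) \<Rightarrow> 'k"
  assumes "\<And>n. S n \<in> FreeSp q" "dual_norm_Cauchy q S"
  obtains \<nu> where "\<nu> \<in> FreeSp q" "(\<lambda>n. dual_norm q (S n - \<nu>)) \<longlonglongrightarrow> 0"
proof -
  have "\<And>n. S n \<in> Lip0_dual q" using assms(1) by (simp add: FreeSp_def)
  then obtain \<nu> where "\<nu> \<in> Lip0_dual q" "(\<lambda>n. dual_norm q (S n - \<nu>)) \<longlonglongrightarrow> 0"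
    using dual_norm_Cauchy_limit assms(2) by blast
  then show ?thesis using FreeSp_closed[of S q \<nu>] assms(1) that by blast
qed

section \<open>Total boundedness in the Lipschitz seminorm\<close>

text \<open>For A the set of all g \<circ> f with g in the unit ball of Lip_0(N), this says that the adjoint
  g \<mapsto> g \<circ> f of lift f is a compact operator.\<close>

definition lipschitz_totally_bounded :: "('a::metric_space \<Rightarrow> 'k::real_normed_field) set \<Rightarrow> bool" where
  "lipschitz_totally_bounded A \<longleftrightarrow>
     (\<forall>e>0. \<exists>G. finite G \<and> G \<subseteq> A \<and> (\<forall>g\<in>A. \<exists>g'\<in>G. e-lipschitz_on UNIV (\<lambda>x. g x - g' x)))"

lemma Lip0_dual_seq_pointwise_bounded:
  assumes "\<And>n. \<mu> n \<in> Lip0_dual p" "\<And>n. dual_norm p (\<mu> n) \<le> 1" "h \<in> Lip0 p"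
  shows "\<exists>B. \<forall>n. norm (\<mu> n h) \<le> B"
proof -
  obtain D where "D-lipschitz_on UNIV h" "h p = 0" using assms(3) unfolding Lip0_def by blast
  then have "(D + 1)-lipschitz_on UNIV h" "D + 1 > 0" "h p = 0"
    using lipschitz_on_nonneg[of D UNIV h] lipschitz_on_mono[of D UNIV h UNIV "D + 1"] by auto
  then have "norm (\<mu> n h) \<le> (D + 1) * 1" for n
    using norm_le_lipschitz_dual_norm[OF assms(1)] assms(2)[of n]
    by (meson mult_left_mono order_trans less_imp_le)
  then show ?thesis by blast
qed

lemma finite_family_uniformly_Cauchy:
  fixes x :: "'g \<Rightarrow> nat \<Rightarrow> 'k::real_normed_field"
  assumes "finite G" "\<And>g. g \<in> G \<Longrightarrow> convergent (\<lambda>n. x g n)" "e > 0"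
  obtains N where "\<And>n m g. n \<ge> N \<Longrightarrow> m \<ge> N \<Longrightarrow> g \<in> G \<Longrightarrow> dist (x g n) (x g m) < e"
proof -
  have "eventually (\<lambda>nm. \<forall>g\<in>G. dist (x g (fst nm)) (x g (snd nm)) < e) (sequentially \<times>\<^sub>F sequentially)"
  proof (rule eventually_ball_finite[OF assms(1)], rule ballI)
    fix g assume "g \<in> G"
    then obtain M where "\<forall>n\<ge>M. \<forall>m\<ge>M. dist (x g n) (x g m) < e"
      using assms(2,3) convergent_Cauchy metric_CauchyD by blast
    then show "eventually (\<lambda>nm. dist (x g (fst nm)) (x g (snd nm)) < e) (sequentially \<times>\<^sub>F sequentially)"
      unfolding eventually_prod_sequentially by auto
  qed
  then obtain N where "\<forall>m\<ge>N. \<forall>n\<ge>N. \<forall>g\<in>G. dist (x g n) (x g m) < e"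
    unfolding eventually_prod_sequentially by auto
  then show ?thesis using that by blast
qed

lemma norm_Lip0_dual_le_approx:
  assumes \<phi>: "\<phi> \<in> Lip0_dual p" and h: "h \<in> Lip0 p" "h' \<in> Lip0 p"
    and a: "a > 0" "a-lipschitz_on UNIV (\<lambda>x. h x - h' x)"
  shows "norm (\<phi> h) \<le> norm (\<phi> h') + a * dual_norm p \<phi>"
proof -
  have "(\<lambda>x. h x - h' x) p = 0" using h by (simp add: Lip0_def)
  then have "norm (\<phi> h - \<phi> h') \<le> a * dual_norm p \<phi>"
    using norm_le_lipschitz_dual_norm[OF \<phi> a] Lip0_dual_minus[OF \<phi> h] by simp
  then show ?thesis
    using norm_triangle_sub[of "\<phi> h" "\<phi> h'"] by (simp add: norm_minus_commute)
qed

lemma uniformly_Cauchy_subseq_on_lipschitz_totally_bounded: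
  fixes \<mu> :: "nat \<Rightarrow> ('a::metric_space \<Rightarrow> 'k::real_normed_field) \<Rightarrow> 'k"
  assumes \<mu>: "\<And>n. \<mu> n \<in> Lip0_dual p" "\<And>n. dual_norm p (\<mu> n) \<le> 1"
    and A: "A \<subseteq> Lip0 p" "lipschitz_totally_bounded A"
  obtains r :: "nat \<Rightarrow> nat" where "strict_mono r"
    "\<And>e. e > 0 \<Longrightarrow> \<exists>N. \<forall>n\<ge>N. \<forall>m\<ge>N. \<forall>h\<in>A. norm (\<mu> (r n) h - \<mu> (r m) h) \<le> e"
proof -
  obtain Gs where Gs: "\<And>j. finite (Gs j)" "\<And>j. Gs j \<subseteq> A"
    "\<And>j h. h \<in> A \<Longrightarrow> \<exists>h'\<in>Gs j. (inverse (real (Suc j)))-lipschitz_on UNIV (\<lambda>x. h x - h' x)"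
  proof -
    have "\<forall>j. \<exists>G. finite G \<and> G \<subseteq> A \<and>
        (\<forall>h\<in>A. \<exists>h'\<in>G. (inverse (real (Suc j)))-lipschitz_on UNIV (\<lambda>x. h x - h' x))"
      using A(2) unfolding lipschitz_totally_bounded_def by simp
    then show ?thesis using that by metis
  qed
  have "\<exists>B. \<forall>n. norm (\<mu> n h) \<le> B" if "h \<in> Gs j" for j h
    using that Gs(2) A(1) Lip0_dual_seq_pointwise_bounded[of \<mu> p, OF \<mu>] by blast
  then obtain r where r: "strict_mono r" "\<And>j h. h \<in> Gs j \<Longrightarrow> convergent (\<lambda>n. \<mu> (r n) h)"
    using diagonal_convergent_subseq[of Gs "\<lambda>h n. \<mu> n h"] Gs(1) by blast
  have Cauchy: "\<exists>N. \<forall>n\<ge>N. \<forall>m\<ge>N. \<forall>h\<in>A. norm (\<mu> (r n) h - \<mu> (r m) h) \<le> e" if "e > 0" for e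
  proof -
    obtain j where j: "inverse (real (Suc j)) < e / 4"
      using reals_Archimedean \<open>e > 0\<close> by (meson divide_pos_pos zero_less_numeral)
    obtain N where N: "\<And>n m h'. n \<ge> N \<Longrightarrow> m \<ge> N \<Longrightarrow> h' \<in> Gs j \<Longrightarrow>
        norm (\<mu> (r n) h' - \<mu> (r m) h') < e / 2"
      using finite_family_uniformly_Cauchy[OF Gs(1), of j "\<lambda>h n. \<mu> (r n) h" "e / 2"] r(2) \<open>e > 0\<close>
      by (auto simp: dist_norm)
    have "norm (\<mu> (r n) h - \<mu> (r m) h) \<le> e" if "n \<ge> N" "m \<ge> N" "h \<in> A" for n m h
    proof -
      obtain h' where h': "h' \<in> Gs j" "(inverse (real (Suc j)))-lipschitz_on UNIV (\<lambda>x. h x - h' x)"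
        using Gs(3)[OF \<open>h \<in> A\<close>] by blast
      define \<phi> where "\<phi> = \<mu> (r n) - \<mu> (r m)"
      have \<phi>: "\<phi> \<in> Lip0_dual p" "dual_norm p \<phi> \<le> 2"
        using \<mu>(2)[of "r n"] \<mu>(2)[of "r m"] dual_norm_diff_le[OF \<mu>(1) \<mu>(1), of "r n" "r m"]
          Lip0_dual_diff[OF \<mu>(1) \<mu>(1)] by (auto simp: \<phi>_def)
      have "norm (\<phi> h) \<le> norm (\<phi> h') + inverse (real (Suc j)) * dual_norm p \<phi>"
        using A(1) Gs(2) h' \<open>h \<in> A\<close> by (intro norm_Lip0_dual_le_approx[OF \<phi>(1)]) auto
      also have "\<dots> \<le> e / 2 + e / 4 * 2"
        using N[OF that(1,2) h'(1)] j \<phi>(2) dual_norm_nonneg[OF \<phi>(1)] \<open>e > 0\<close>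
        by (intro add_mono mult_mono) (auto simp: \<phi>_def)
      finally show ?thesis by (simp add: \<phi>_def)
    qed
    then show ?thesis by blast
  qed
  show ?thesis using r(1) Cauchy by (rule that)
qed

section \<open>Maps that are flat locally and at infinity\<close>

definition uniformly_locally_flat :: "('a::metric_space \<Rightarrow> 'b::metric_space) \<Rightarrow> bool" where
  "uniformly_locally_flat f \<longleftrightarrow>
     (\<forall>\<epsilon>>0. \<exists>\<delta>>0. \<forall>x y. x \<noteq> y \<and> dist x y < \<delta> \<longrightarrow> dist (f x) (f y) \<le> \<epsilon> * dist x y)"

definition flat_at_infinity :: "'a::metric_space \<Rightarrow> ('a \<Rightarrow> 'b::metric_space) \<Rightarrow> bool" where
  "flat_at_infinity p f \<longleftrightarrow>
     (\<forall>\<epsilon>>0. \<exists>R>0. \<forall>x y. x \<noteq> y \<and> dist x p \<ge> R \<and> dist y p \<ge> R \<longrightarrow> dist (f x) (f y) \<le> \<epsilon> * dist x y)"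

lemma flat_far_to_near:
  fixes f :: "'a::metric_space \<Rightarrow> 'b::metric_space"
  assumes f_lip: "L-lipschitz_on UNIV f"
    and flat: "\<And>x y. x \<noteq> y \<Longrightarrow> R \<le> dist x p \<Longrightarrow> R \<le> dist y p \<Longrightarrow> dist (f x) (f y) \<le> \<epsilon> * dist x y"
    and eps: "\<epsilon> > 0" and "R > 0" and z: "R \<le> dist z p"
    and x: "R + (\<epsilon> + L) * (R + dist z p) / \<epsilon> \<le> dist x p" and y: "dist y p < R"
  shows "dist (f x) (f y) \<le> 2 * \<epsilon> * dist x y"
proof -
  \<comment> \<open>route through the far point z: the flat leg is long, the Lipschitz leg is short\<close>
  define A where "A = R + dist z p"
  have L: "L \<ge> 0" using lipschitz_on_nonneg[OF f_lip] .
  have A: "A \<ge> 0" using \<open>R > 0\<close> z by (simp add: A_def)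
  have R: "R \<le> dist x p"
    using x eps L A unfolding A_def by (smt (verit) divide_nonneg_pos mult_nonneg_nonneg)
  have "dist x p \<le> dist x y + dist y p" by (rule dist_triangle)
  then have "(\<epsilon> + L) * A / \<epsilon> \<le> dist x y"
    using x y by (simp add: A_def)
  then have d: "(\<epsilon> + L) * A \<le> \<epsilon> * dist x y"
    using eps by (simp add: pos_divide_le_eq mult.commute)
  have zy: "dist z y \<le> A"
    using dist_triangle[of z y p] y by (simp add: A_def dist_commute)
  have "dist (f x) (f z) \<le> \<epsilon> * dist x z"
    using flat[OF _ R z] by (cases "x = z") auto
  also have "\<dots> \<le> \<epsilon> * (dist x y + A)"
    using dist_triangle[of x z y] zy eps by (simp add: mult_left_mono dist_commute)
  finally have "dist (f x) (f z) \<le> \<epsilon> * (dist x y + A)" .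
  moreover have "dist (f z) (f y) \<le> L * A"
    using lipschitz_onD[OF f_lip, of z y] zy L by (simp add: order_trans mult_left_mono)
  ultimately have "dist (f x) (f y) \<le> \<epsilon> * dist x y + (\<epsilon> + L) * A"
    using dist_triangle[of "f x" "f y" "f z"] by (simp add: algebra_simps)
  then show ?thesis using d by simp
qed

lemma flat_at_infinity_one_far:
  fixes f :: "'a::metric_space \<Rightarrow> 'b::metric_space"
  assumes f_lip: "L-lipschitz_on UNIV f"
    and flat: "\<And>x y. x \<noteq> y \<Longrightarrow> R \<le> dist x p \<Longrightarrow> R \<le> dist y p \<Longrightarrow> dist (f x) (f y) \<le> \<epsilon> * dist x y"
    and eps: "\<epsilon> > 0" and "R > 0"
  obtains R' where
    "\<And>x y. x \<noteq> y \<Longrightarrow> R' \<le> dist x p \<or> R' \<le> dist y p \<Longrightarrow> dist (f x) (f y) \<le> 2 * \<epsilon> * dist x y"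
proof (cases "\<exists>z. R \<le> dist z p")
  case False
  then show ?thesis using that[of R] by blast
next
  case True
  then obtain z where z: "R \<le> dist z p" by blast
  define R' where "R' = R + (\<epsilon> + L) * (R + dist z p) / \<epsilon>"
  have "0 \<le> (\<epsilon> + L) * (R + dist z p) / \<epsilon>"
    using eps lipschitz_on_nonneg[OF f_lip] \<open>R > 0\<close> by simp
  then have "R \<le> R'" by (simp add: R'_def)
  have one_far: "dist (f x) (f y) \<le> 2 * \<epsilon> * dist x y" if "x \<noteq> y" "R' \<le> dist x p" for x y
  proof (cases "R \<le> dist y p")
    case True
    then have "dist (f x) (f y) \<le> \<epsilon> * dist x y"
      using flat that \<open>R \<le> R'\<close> by simp
    then show ?thesis using eps by (smt (verit) mult_right_mono zero_le_dist)
  next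
    case False
    then show ?thesis
      using flat_far_to_near[OF f_lip flat eps \<open>R > 0\<close> z] that(2) by (simp add: R'_def)
  qed
  show ?thesis
  proof (rule that[of R'])
    fix x y assume "x \<noteq> y" "R' \<le> dist x p \<or> R' \<le> dist y p"
    then show "dist (f x) (f y) \<le> 2 * \<epsilon> * dist x y"
      using one_far one_far[of y x] by (auto simp: dist_commute)
  qed
qed

lemma lipschitz_comp_of_flat:
  fixes f :: "'a::metric_space \<Rightarrow> 'b::metric_space" and u :: "'b \<Rightarrow> 'k::real_normed_field"
  assumes e: "e > 0"
    and u: "\<And>a b. norm (u a - u b) \<le> 2 * dist a b"
    and near: "\<And>x y. x \<noteq> y \<Longrightarrow> dist x y < \<delta> \<Longrightarrow> dist (f x) (f y) \<le> e / 2 * dist x y"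
    and far: "\<And>x y. x \<noteq> y \<Longrightarrow> R \<le> dist x p \<or> R \<le> dist y p \<Longrightarrow> dist (f x) (f y) \<le> e / 2 * dist x y"
    and small: "\<And>x. dist x p \<le> R \<Longrightarrow> norm (u (f x)) \<le> e * \<delta> / 2"
  shows "e-lipschitz_on UNIV (\<lambda>x. u (f x))"
proof (rule lipschitz_onI)
  fix x y :: 'a
  consider (trivial) "x = y"
    | (flat) "x \<noteq> y" "dist x y < \<delta> \<or> R \<le> dist x p \<or> R \<le> dist y p"
    | (bounded) "\<delta> \<le> dist x y" "dist x p \<le> R" "dist y p \<le> R"
    by (cases "x = y"; cases "dist x y < \<delta> \<or> R \<le> dist x p \<or> R \<le> dist y p") auto
  then show "dist (u (f x)) (u (f y)) \<le> e * dist x y"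
  proof cases
    case flat
    then have "dist (f x) (f y) \<le> e / 2 * dist x y" using near far by blast
    then show ?thesis using u[of "f x" "f y"] by (simp add: dist_norm)
  next
    case bounded
    then have "dist (u (f x)) (u (f y)) \<le> e * \<delta>"
      using small[of x] small[of y] norm_triangle_ineq4[of "u (f x)" "u (f y)"] by (simp add: dist_norm)
    also have "\<dots> \<le> e * dist x y" using bounded(1) e by simp
    finally show ?thesis .
  qed simp
qed (use e in simp)

lemma norm_diff_Lip0_ball_le:
  assumes "g \<in> Lip0_ball q" "g' \<in> Lip0_ball q"
  shows "norm ((g a - g' a) - (g b - g' b)) \<le> 2 * dist a b"
proof -
  have "(g a - g' a) - (g b - g' b) = (g a - g b) - (g' a - g' b)" by (simp add: algebra_simps)
  then have "norm ((g a - g' a) - (g b - g' b)) \<le> norm (g a - g b) + norm (g' a - g' b)"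
    by (metis norm_triangle_ineq4)
  then show ?thesis
    using Lip0_ball_norm_diff_le[OF assms(1), of a b] Lip0_ball_norm_diff_le[OF assms(2), of a b] by linarith
qed

lemma Lip0_ball_finite_net_on_totally_bounded:
  fixes K :: "'b::metric_space set"
  assumes "totally_bounded K" "\<eta> > 0"
  obtains G :: "('b \<Rightarrow> 'k::real_normed_field) set" where "finite G" "G \<subseteq> Lip0_ball q"
    "\<And>g. g \<in> Lip0_ball q \<Longrightarrow> \<exists>g'\<in>G. \<forall>w\<in>K. norm (g w - g' w) < \<eta>"
proof -
  \<comment> \<open>1-Lipschitz functions that are close on a finite \<eta>/4-net Z of K are close on all of K\<close>
  have "\<eta> / 4 > 0" using assms(2) by simp
  then obtain Z where Z: "finite Z" "K \<subseteq> (\<Union>z\<in>Z. {w. dist z w < \<eta> / 4})"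
    using assms(1) unfolding totally_bounded_metric by blast
  define B where "B = (\<Sum>z\<in>Z. dist z q)"
  have "norm (g z) \<le> B" if "g \<in> Lip0_ball q" "z \<in> Z" for g :: "'b \<Rightarrow> 'k" and z
    using Lip0_ball_norm_le[OF that(1), of z] member_le_sum[OF that(2), of "\<lambda>z. dist z q"] Z(1)
    by (simp add: B_def)
  then have bound: "\<forall>g\<in>Lip0_ball q. \<forall>z\<in>Z. norm (g z :: 'k) \<le> B" by blast
  have "\<eta> / 2 > 0" using assms(2) by simp
  then obtain G where G: "finite G" "G \<subseteq> (Lip0_ball q :: ('b \<Rightarrow> 'k) set)"
    "\<And>g. g \<in> Lip0_ball q \<Longrightarrow> \<exists>g'\<in>G. \<forall>z\<in>Z. norm (g z - g' z) < \<eta> / 2"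
    using finite_net_on_finite_set[OF Z(1) bound] by blast
  have approx: "\<exists>g'\<in>G. \<forall>w\<in>K. norm (g w - g' w) < \<eta>" if g: "g \<in> Lip0_ball q" for g
  proof -
    obtain g' where g': "g' \<in> G" "\<And>z. z \<in> Z \<Longrightarrow> norm (g z - g' z) < \<eta> / 2"
      using G(3)[OF g] by blast
    have "norm (g w - g' w) < \<eta>" if "w \<in> K" for w
    proof -
      obtain z where z: "z \<in> Z" "dist z w < \<eta> / 4" using Z(2) \<open>w \<in> K\<close> by blast
      have "norm (g w - g' w) \<le> norm (g z - g' z) + norm ((g w - g' w) - (g z - g' z))"
        by (rule norm_triangle_sub)
      also have "\<dots> < \<eta> / 2 + 2 * (\<eta> / 4)"
      proof (rule add_less_le_mono)
        have "g' \<in> Lip0_ball q" using G(2) g'(1) by blast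
        then have "norm ((g w - g' w) - (g z - g' z)) \<le> 2 * dist w z"
          by (rule norm_diff_Lip0_ball_le[OF g])
        then show "norm ((g w - g' w) - (g z - g' z)) \<le> 2 * (\<eta> / 4)"
          using z(2) by (simp add: dist_commute)
      qed (rule g'(2)[OF z(1)])
      finally show ?thesis by simp
    qed
    then show ?thesis using g'(1) by blast
  qed
  show ?thesis using G(1,2) approx by (rule that)
qed

lemma Lip0_ball_comp_finite_net:
  fixes f :: "'a::metric_space \<Rightarrow> 'b::metric_space"
  assumes f_lip: "L-lipschitz_on UNIV f"
    and P1: "\<And>S. bounded S \<Longrightarrow> totally_bounded (f ` S)"
    and P2: "uniformly_locally_flat f" and P4: "flat_at_infinity p f"
    and e: "e > 0"
  obtains G :: "('b \<Rightarrow> 'k::real_normed_field) set" where "finite G" "G \<subseteq> Lip0_ball q"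
    "\<And>g. g \<in> Lip0_ball q \<Longrightarrow> \<exists>g'\<in>G. e-lipschitz_on UNIV (\<lambda>x. g (f x) - g' (f x))"
proof -
  have "e / 2 > 0" "e / 4 > 0" using e by simp_all
  obtain \<delta> where \<delta>: "\<delta> > 0"
    and near_all: "\<forall>x y. x \<noteq> y \<and> dist x y < \<delta> \<longrightarrow> dist (f x) (f y) \<le> e / 2 * dist x y"
    using P2[unfolded uniformly_locally_flat_def, rule_format, OF \<open>e / 2 > 0\<close>] by blast
  obtain R0 where "R0 > 0" and far_all:
    "\<forall>x y. x \<noteq> y \<and> dist x p \<ge> R0 \<and> dist y p \<ge> R0 \<longrightarrow> dist (f x) (f y) \<le> e / 4 * dist x y"
    using P4[unfolded flat_at_infinity_def, rule_format, OF \<open>e / 4 > 0\<close>] by blast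
  have near: "\<And>x y. x \<noteq> y \<Longrightarrow> dist x y < \<delta> \<Longrightarrow> dist (f x) (f y) \<le> e / 2 * dist x y"
    and far_R0: "\<And>x y. x \<noteq> y \<Longrightarrow> R0 \<le> dist x p \<Longrightarrow> R0 \<le> dist y p \<Longrightarrow> dist (f x) (f y) \<le> e / 4 * dist x y"
    using near_all far_all by blast+
  obtain R where
    "\<And>x y. x \<noteq> y \<Longrightarrow> R \<le> dist x p \<or> R \<le> dist y p \<Longrightarrow> dist (f x) (f y) \<le> 2 * (e / 4) * dist x y"
    using flat_at_infinity_one_far[OF f_lip far_R0 \<open>e / 4 > 0\<close> \<open>R0 > 0\<close>] by blast
  then have far:
    "\<And>x y. x \<noteq> y \<Longrightarrow> R \<le> dist x p \<or> R \<le> dist y p \<Longrightarrow> dist (f x) (f y) \<le> e / 2 * dist x y"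
    by simp
  have "totally_bounded (f ` cball p R)" by (rule P1) simp
  moreover have "e * \<delta> / 2 > 0" using e \<delta> by simp
  ultimately obtain G :: "('b \<Rightarrow> 'k) set" where G: "finite G" "G \<subseteq> Lip0_ball q"
    "\<And>g. g \<in> Lip0_ball q \<Longrightarrow> \<exists>g'\<in>G. \<forall>w\<in>f ` cball p R. norm (g w - g' w) < e * \<delta> / 2"
    using Lip0_ball_finite_net_on_totally_bounded[where q = q and 'k = 'k] by blast
  have approx: "\<exists>g'\<in>G. e-lipschitz_on UNIV (\<lambda>x. g (f x) - g' (f x))" if g: "g \<in> Lip0_ball q" for g
  proof -
    obtain g' where g': "g' \<in> G" "\<And>w. w \<in> f ` cball p R \<Longrightarrow> norm (g w - g' w) < e * \<delta> / 2"
      using G(3)[OF g] by blast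
    have "g' \<in> Lip0_ball q" using G(2) g'(1) by blast
    then have u: "norm ((g a - g' a) - (g b - g' b)) \<le> 2 * dist a b" for a b
      by (rule norm_diff_Lip0_ball_le[OF g])
    have small: "norm (g (f x) - g' (f x)) \<le> e * \<delta> / 2" if "dist x p \<le> R" for x
      using g'(2)[of "f x"] that by (simp add: dist_commute)
    have "e-lipschitz_on UNIV (\<lambda>x. g (f x) - g' (f x))"
      using e u near far small by (rule lipschitz_comp_of_flat)
    then show ?thesis using g'(1) by blast
  qed
  show ?thesis using G(1,2) approx by (rule that)
qed

lemma lipschitz_totally_bounded_comp_Lip0_ball:
  fixes f :: "'a::metric_space \<Rightarrow> 'b::metric_space"
  assumes f_lip: "L-lipschitz_on UNIV f"
    and P1: "\<And>S. bounded S \<Longrightarrow> totally_bounded (f ` S)"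
    and P2: "uniformly_locally_flat f" and P4: "flat_at_infinity p f"
  shows "lipschitz_totally_bounded ((\<lambda>g x. g (f x)) ` (Lip0_ball q :: ('b \<Rightarrow> 'k::real_normed_field) set))"
  unfolding lipschitz_totally_bounded_def
proof (intro allI impI)
  fix e :: real assume "e > 0"
  then obtain G :: "('b \<Rightarrow> 'k) set" where G: "finite G" "G \<subseteq> Lip0_ball q"
    "\<And>g. g \<in> Lip0_ball q \<Longrightarrow> \<exists>g'\<in>G. e-lipschitz_on UNIV (\<lambda>x. g (f x) - g' (f x))"
    using Lip0_ball_comp_finite_net[OF f_lip P1 P2 P4] by blast
  show "\<exists>G'. finite G' \<and> G' \<subseteq> (\<lambda>g x. g (f x)) ` (Lip0_ball q :: ('b \<Rightarrow> 'k) set) \<and>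
      (\<forall>h\<in>(\<lambda>g x. g (f x)) ` Lip0_ball q. \<exists>h'\<in>G'. e-lipschitz_on UNIV (\<lambda>x. h x - h' x))"
  proof (intro exI[of _ "(\<lambda>g x. g (f x)) ` G"] conjI ballI)
    show "finite ((\<lambda>g x. g (f x)) ` G)" using G(1) by simp
    show "(\<lambda>g x. g (f x)) ` G \<subseteq> (\<lambda>g x. g (f x)) ` Lip0_ball q" using G(2) by blast
    fix h :: "'a \<Rightarrow> 'k" assume "h \<in> (\<lambda>g x. g (f x)) ` Lip0_ball q"
    then obtain g where g: "g \<in> Lip0_ball q" "h = (\<lambda>x. g (f x))" by blast
    then obtain g' where "g' \<in> G" "e-lipschitz_on UNIV (\<lambda>x. g (f x) - g' (f x))"
      using G(3) by blast
    then show "\<exists>h'\<in>(\<lambda>g x. g (f x)) ` G. e-lipschitz_on UNIV (\<lambda>x. h x - h' x)"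
      using g(2) by (intro bexI[of _ "\<lambda>x. g' (f x)"]) auto
  qed
qed

section \<open>Compactness of the linearisation\<close>

lemma dual_norm_Cauchy_lift:
  fixes f :: "'a::metric_space \<Rightarrow> 'b::metric_space"
  assumes "\<And>e. e > 0 \<Longrightarrow> \<exists>N. \<forall>n\<ge>N. \<forall>m\<ge>N.
      \<forall>h\<in>(\<lambda>g x. g (f x)) ` (Lip0_ball q :: ('b \<Rightarrow> 'k::real_normed_field) set). norm (\<mu> n h - \<mu> m h) \<le> e"
  shows "dual_norm_Cauchy q (\<lambda>n. lift f (\<mu> n))"
  unfolding dual_norm_Cauchy_def
proof (intro allI impI)
  fix e :: real assume "e > 0"
  then obtain N where N: "\<forall>n\<ge>N. \<forall>m\<ge>N.
      \<forall>h\<in>(\<lambda>g x. g (f x)) ` (Lip0_ball q :: ('b \<Rightarrow> 'k) set). norm (\<mu> n h - \<mu> m h) \<le> e"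
    using assms by blast
  have "dual_norm q (lift f (\<mu> n) - lift f (\<mu> m)) \<le> e" if "n \<ge> N" "m \<ge> N" for n m
    using N that by (intro dual_norm_leI) (auto simp: lift_apply)
  then show "\<exists>N. \<forall>n\<ge>N. \<forall>m\<ge>N. dual_norm q (lift f (\<mu> n) - lift f (\<mu> m)) \<le> e" by blast
qed

lemma compact_free_op_lift:
  fixes f :: "'a::metric_space \<Rightarrow> 'b::metric_space"
  assumes L: "L > 0" "L-lipschitz_on UNIV f" and base: "f p = q"
    and tb: "lipschitz_totally_bounded
      ((\<lambda>g x. g (f x)) ` (Lip0_ball q :: ('b \<Rightarrow> 'k::{real_normed_field,banach}) set))"
  shows "compact_free_op p q (lift f :: (('a \<Rightarrow> 'k) \<Rightarrow> 'k) \<Rightarrow> (('b \<Rightarrow> 'k) \<Rightarrow> 'k))"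
proof -
  define A where "A = (\<lambda>g x. g (f x)) ` (Lip0_ball q :: ('b \<Rightarrow> 'k) set)"
  have A: "A \<subseteq> Lip0 p" "lipschitz_totally_bounded A"
    using Lip0_comp[OF _ L(2) base] Lip0_ball_subset_Lip0 tb by (auto simp: A_def)
  have "\<exists>r \<nu>. strict_mono r \<and> \<nu> \<in> FreeSp q \<and> (\<lambda>n. dual_norm q (lift f (\<mu> (r n)) - \<nu>)) \<longlonglongrightarrow> 0"
    if \<mu>: "\<forall>n. \<mu> n \<in> FreeSp p \<and> dual_norm p (\<mu> n) \<le> 1" for \<mu> :: "nat \<Rightarrow> ('a \<Rightarrow> 'k) \<Rightarrow> 'k"
  proof -
    have "\<And>n. \<mu> n \<in> Lip0_dual p" "\<And>n. dual_norm p (\<mu> n) \<le> 1"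
      using \<mu> by (simp_all add: FreeSp_def)
    then obtain r :: "nat \<Rightarrow> nat" where r: "strict_mono r"
      "\<And>e. e > 0 \<Longrightarrow> \<exists>N. \<forall>n\<ge>N. \<forall>m\<ge>N. \<forall>h\<in>A. norm (\<mu> (r n) h - \<mu> (r m) h) \<le> e"
      using uniformly_Cauchy_subseq_on_lipschitz_totally_bounded[OF _ _ A] by blast
    then have "dual_norm_Cauchy q (\<lambda>n. lift f (\<mu> (r n)))"
      unfolding A_def by (intro dual_norm_Cauchy_lift)
    then obtain \<nu> where "\<nu> \<in> FreeSp q" "(\<lambda>n. dual_norm q (lift f (\<mu> (r n)) - \<nu>)) \<longlonglongrightarrow> 0"
      using FreeSp_complete lift_FreeSp[OF L base] \<mu> by metis
    then show ?thesis using r(1) by blast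
  qed
  then show ?thesis
    unfolding compact_free_op_def using lift_FreeSp[OF L base] by blast
qed

theorem corollary2p6:
  fixes f :: "'a::complete_space \<Rightarrow> 'b::complete_space"
    and p :: 'a and q :: 'b
  assumes lip: "\<exists>L. L-lipschitz_on UNIV f"
    and base: "f p = q"
    and P1: "\<And>S. bounded S \<Longrightarrow> totally_bounded (f ` S)"
    and P2: "\<forall>\<epsilon>>0. \<exists>\<delta>>0. \<forall>x y. x \<noteq> y \<and> dist x y < \<delta> \<longrightarrow> dist (f x) (f y) \<le> \<epsilon> * dist x y"
    and P4: "\<forall>\<epsilon>>0. \<exists>R>0. \<forall>x y. x \<noteq> y \<and> dist x p \<ge> R \<and> dist y p \<ge> R \<longrightarrow>
               dist (f x) (f y) \<le> \<epsilon> * dist x y"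
  shows "compact_free_op p q
           (lift f :: (('a \<Rightarrow> 'k::{real_normed_field,banach}) \<Rightarrow> 'k) \<Rightarrow> (('b \<Rightarrow> 'k) \<Rightarrow> 'k))"
proof -
  obtain L0 where L0: "L0-lipschitz_on UNIV f" using lip by blast
  then have L: "L0 + 1 > 0" "(L0 + 1)-lipschitz_on UNIV f"
    using lipschitz_on_nonneg[OF L0] lipschitz_on_mono[OF L0, of UNIV "L0 + 1"] by auto
  have flat: "uniformly_locally_flat f" "flat_at_infinity p f"
    using P2 P4 by (simp_all add: uniformly_locally_flat_def flat_at_infinity_def)
  show ?thesis
    using compact_free_op_lift[OF L base lipschitz_totally_bounded_comp_Lip0_ball[OF L(2) P1 flat]] .
qed

end
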